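(* Let $\mathcal H$ be a Hilbert space of finite dimension $\Omega$ and let $\rho$ be a density matrix on $\mathcal H$ of rank $r$. (i) Every medium consistent family of histories with initial state $\rho$ contains at most $r\Omega$ histories of nonzero probability. (ii) There are infinitely many medium consistent families of histories with initial state $\rho$ that contain exactly $r\Omega$ histories of nonzero probability.
   Context: A set of projectors $\sigma=\{P_\alpha\}_{\alpha=1,\dots,m}$ on $\mathcal H$ is called exhaustive and exclusive if $\sum_{\alpha}P_\alpha=\mathbb 1$ and $P_\alpha P_\beta=\delta_{\alpha\beta}P_\alpha$. A family of histories $\mathcal S=\{\rho,\sigma^{(1)},\dots,\sigma^{(n)}\}$ consists of a density matrix $\rho$ (the initial state) and $n$ exhaustive exclusive sets of projectors $\sigma^{(j)}=\{P^{(j)}_{\alpha_j}\}_{\alpha_j=1,\dots,m_j}$ associated with times $t_1<\dots<t_n$, written in the Heisenberg picture ($P^{(j)}_{\alpha_j}=U(t_j,0)^\dagger\hat P^{(j)}_{\alpha_j}U(t_j,0)$ for a unitary evolution $U$; the family is specified by $\rho$ and these Heisenberg-picture sets). A history is a tuple $\alpha=(\alpha_1,\dots,\alpha_n)$ with history operator $C_\alpha=P^{(1)}_{\alpha_1}P^{(2)}_{\alpha_2}\cdots P^{(n)}_{\alpha_n}$; its probability is $Pr(\alpha)=\mathrm{Tr}\{C_\alpha^\dagger\rho C_\alpha\}$, and the coherence function is $D(\alpha;\beta)=\mathrm{Tr}\{C_\alpha^\dagger\rho C_\beta\}$. The family is medium consistent if $D(\alpha;\beta)=\delta_{\alpha\beta}Pr(\alpha)$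 for all histories $\alpha,\beta$, where $\delta_{\alpha\beta}=\prod_j\delta_{\alpha_j\beta_j}$. *)

theory Defs
  imports "Jordan_Normal_Form.Schur_Decomposition" "Jordan_Normal_Form.DL_Rank"
begin

text \<open>Finite-dimensional Hilbert space of dimension Omega = complex column vectors of length Omega;
operators = Omega x Omega complex matrices.\<close>

definition mtrace :: "complex mat \<Rightarrow> complex" where
  "mtrace A = (\<Sum>i<dim_row A. A $$ (i, i))"

definition hermitian_mat :: "nat \<Rightarrow> complex mat \<Rightarrow> bool" where
  "hermitian_mat n A \<longleftrightarrow> A \<in> carrier_mat n n \<and> mat_adjoint A = A"

definition density_matrix :: "nat \<Rightarrow> complex mat \<Rightarrow> bool" where
  "density_matrix n \<rho> \<longleftrightarrow> hermitian_mat n \<rho>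
     \<and> (\<forall>v \<in> carrier_vec n. 0 \<le> (\<Sum>i<n. cnj (v $ i) * (\<rho> *\<^sub>v v) $ i))
     \<and> mtrace \<rho> = 1"

definition mat_rank :: "nat \<Rightarrow> complex mat \<Rightarrow> nat" where
  "mat_rank n A = vec_space.rank n (A :: complex mat)"

definition projector :: "nat \<Rightarrow> complex mat \<Rightarrow> bool" where
  "projector n P \<longleftrightarrow> hermitian_mat n P \<and> P * P = P"

definition exh_excl :: "nat \<Rightarrow> complex mat list \<Rightarrow> bool" where
  "exh_excl n Ps \<longleftrightarrow> (\<forall>P \<in> set Ps. projector n P)
     \<and> foldr (+) Ps (0\<^sub>m n n) = 1\<^sub>m n
     \<and> (\<forall>a < length Ps. \<forall>b < length Ps. Ps ! a * Ps ! b = (if a = b then Ps ! a else 0\<^sub>m n n))"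

text \<open>A family of histories with initial state rho: a nonempty list of n exhaustive exclusive
sets (Heisenberg picture) associated with times t_1 < ... < t_n.\<close>
definition family :: "nat \<Rightarrow> complex mat list list \<Rightarrow> bool" where
  "family n \<sigma> \<longleftrightarrow> \<sigma> \<noteq> [] \<and> (\<forall>Ps \<in> set \<sigma>. exh_excl n Ps)"

definition histories :: "complex mat list list \<Rightarrow> nat list set" where
  "histories \<sigma> = {\<alpha>. length \<alpha> = length \<sigma> \<and> (\<forall>j < length \<sigma>. \<alpha> ! j < length (\<sigma> ! j))}"

definition history_op :: "nat \<Rightarrow> complex mat list list \<Rightarrow> nat list \<Rightarrow> complex mat" where
  "history_op n \<sigma> \<alpha> = foldr (\<lambda>(Ps, a) acc. (Ps ! a) * acc) (zip \<sigma> \<alpha>) (1\<^sub>m n)"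

definition coherence :: "nat \<Rightarrow> complex mat \<Rightarrow> complex mat list list \<Rightarrow> nat list \<Rightarrow> nat list \<Rightarrow> complex" where
  "coherence n \<rho> \<sigma> \<alpha> \<beta> = mtrace (mat_adjoint (history_op n \<sigma> \<alpha>) * \<rho> * history_op n \<sigma> \<beta>)"

definition hist_prob :: "nat \<Rightarrow> complex mat \<Rightarrow> complex mat list list \<Rightarrow> nat list \<Rightarrow> complex" where
  "hist_prob n \<rho> \<sigma> \<alpha> = mtrace (mat_adjoint (history_op n \<sigma> \<alpha>) * \<rho> * history_op n \<sigma> \<alpha>)"

definition medium_consistent :: "nat \<Rightarrow> complex mat \<Rightarrow> complex mat list list \<Rightarrow> bool" where
  "medium_consistent n \<rho> \<sigma> \<longleftrightarrow> family n \<sigma> \<and>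
     (\<forall>\<alpha> \<in> histories \<sigma>. \<forall>\<beta> \<in> histories \<sigma>.
        coherence n \<rho> \<sigma> \<alpha> \<beta> = (if \<alpha> = \<beta> then hist_prob n \<rho> \<sigma> \<alpha> else 0))"

definition nonzero_histories :: "nat \<Rightarrow> complex mat \<Rightarrow> complex mat list list \<Rightarrow> nat list set" where
  "nonzero_histories n \<rho> \<sigma> = {\<alpha> \<in> histories \<sigma>. hist_prob n \<rho> \<sigma> \<alpha> \<noteq> 0}"

end

theory Submission
  imports Defs
begin

text \<open>Diagonalise \<rho> = U D U* by the spectral theorem, so that rank \<rho> is the number r of
nonzero diagonal entries d_k of D. With X_\<alpha> = U* C_\<alpha>, the coherence
D(\<beta>;\<alpha>) = \<Sum>_{k,j} cnj((X_\<beta>)_kj) d_k (X_\<alpha>)_kj only involves the r\<Omega> index pairs (k, j) with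
d_k \<noteq> 0. Medium consistency makes the vectors (cnj((X_\<beta>)_kj)) and (d_k (X_\<alpha>)_kj), for \<alpha>, \<beta>
ranging over the histories of nonzero probability, biorthogonal for this pairing; so they are
linearly independent in a space of dimension r\<Omega>, which gives (i).

For (ii), project onto the eigenbasis u_i of \<rho> at the first time and onto the rotated basis
v_j = U F e_j at the second, where F is unitary without zero entries. The history (i, j) then has
C = F_ij u_i v_j*, distinct histories are orthogonal, and the probability d_i |F_ij|^2 is nonzero
exactly when d_i \<noteq> 0. Appending any number of trivial sets {1} gives infinitely many such
families.\<close>

lemma dim_row_mat_adjoint [simp]: "dim_row (mat_adjoint A) = dim_col A"
  and dim_col_mat_adjoint [simp]: "dim_col (mat_adjoint A) = dim_row A"
  by (simp_all add: mat_adjoint_def mat_of_rows_def)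

lemma index_mat_adjoint [simp]:
  "i < dim_col A \<Longrightarrow> j < dim_row A \<Longrightarrow> mat_adjoint A $$ (i, j) = cnj (A $$ (j, i))"
proof -
  assume ij: "i < dim_col A" "j < dim_row A"
  have "mat_adjoint A $$ (i, j) = map conjugate (cols A) ! i $ j"
    unfolding mat_adjoint_def by (rule mat_of_rows_index) (use ij in simp_all)
  with ij show ?thesis by simp
qed

lemma mat_adjoint_carrier [simp]: "A \<in> carrier_mat n m \<Longrightarrow> mat_adjoint A \<in> carrier_mat m n"
  by (intro carrier_matI) (auto dest: carrier_matD)

lemma mat_adjoint_mat_adjoint [simp]: "mat_adjoint (mat_adjoint A) = (A :: complex mat)"
  by (rule eq_matI) simp_all

lemma mat_adjoint_one [simp]: "mat_adjoint (1\<^sub>m n) = (1\<^sub>m n :: complex mat)"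
  by (rule eq_matI) simp_all

lemma mat_adjoint_mult:
  assumes "(A :: complex mat) \<in> carrier_mat n k" "B \<in> carrier_mat k m"
  shows "mat_adjoint (A * B) = mat_adjoint B * mat_adjoint A"
  using assms by (intro eq_matI) (auto simp: scalar_prod_def mult.commute)

definition unitary :: "nat \<Rightarrow> complex mat \<Rightarrow> bool" where
  "unitary n U \<longleftrightarrow> U \<in> carrier_mat n n \<and> mat_adjoint U * U = 1\<^sub>m n \<and> U * mat_adjoint U = 1\<^sub>m n"

lemma unitaryI:
  assumes "U \<in> carrier_mat n n" "mat_adjoint U * U = 1\<^sub>m n"
  shows "unitary n U"
  using assms mat_mult_left_right_inverse[of "mat_adjoint U" n U] by (simp add: unitary_def)

lemma unitary_carrier: "unitary n U \<Longrightarrow> U \<in> carrier_mat n n"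
  by (simp add: unitary_def)

lemma unitary_one: "unitary n (1\<^sub>m n)"
  by (simp add: unitary_def)

lemma unitary_mult:
  assumes "unitary n U" "unitary n V"
  shows "unitary n (U * V)"
proof (rule unitaryI)
  have U: "U \<in> carrier_mat n n" "mat_adjoint U * U = 1\<^sub>m n"
    and V: "V \<in> carrier_mat n n" "mat_adjoint V * V = 1\<^sub>m n"
    using assms by (auto simp: unitary_def)
  show "U * V \<in> carrier_mat n n" using U V by simp
  have "mat_adjoint (U * V) * (U * V) = mat_adjoint V * (mat_adjoint U * (U * V))"
    using U V by (simp add: mat_adjoint_mult assoc_mult_mat[of _ n n _ n _ n])
  also have "mat_adjoint U * (U * V) = (mat_adjoint U * U) * V"
    by (rule assoc_mult_mat[of _ n n _ n _ n, symmetric]) (use U V in simp_all)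
  finally show "mat_adjoint (U * V) * (U * V) = 1\<^sub>m n" using U V by simp
qed

lemma unitary_cols_orthonormal:
  assumes "unitary n U" "a < n" "b < n"
  shows "(\<Sum>k<n. cnj (U $$ (k, a)) * U $$ (k, b)) = (if a = b then 1 else 0)"
proof -
  have "U \<in> carrier_mat n n" using assms(1) by (rule unitary_carrier)
  then have "(\<Sum>k<n. cnj (U $$ (k, a)) * U $$ (k, b)) = (mat_adjoint U * U) $$ (a, b)"
    using assms(2,3) by (simp add: scalar_prod_def atLeast0LessThan)
  then show ?thesis using assms by (simp add: unitary_def)
qed

definition diag_block :: "'a :: zero mat \<Rightarrow> 'a mat \<Rightarrow> 'a mat" where
  "diag_block A B = four_block_mat A (0\<^sub>m (dim_row A) (dim_col B)) (0\<^sub>m (dim_row B) (dim_col A)) B"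

lemma diag_block_carrier [simp]:
  "A \<in> carrier_mat a a \<Longrightarrow> B \<in> carrier_mat b b \<Longrightarrow> diag_block A B \<in> carrier_mat (a + b) (a + b)"
  unfolding diag_block_def by (rule four_block_carrier_mat)

lemma diag_block_mult:
  fixes A1 A2 :: "'a :: semiring_0 mat"
  assumes "A1 \<in> carrier_mat a a" "A2 \<in> carrier_mat a a" "B1 \<in> carrier_mat b b" "B2 \<in> carrier_mat b b"
  shows "diag_block A1 B1 * diag_block A2 B2 = diag_block (A1 * A2) (B1 * B2)"
proof -
  have "diag_block A1 B1 * diag_block A2 B2
      = four_block_mat A1 (0\<^sub>m a b) (0\<^sub>m b a) B1 * four_block_mat A2 (0\<^sub>m a b) (0\<^sub>m b a) B2"
    using assms by (simp add: diag_block_def)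
  also have "\<dots> = four_block_mat (A1 * A2 + 0\<^sub>m a b * 0\<^sub>m b a) (A1 * 0\<^sub>m a b + 0\<^sub>m a b * B2)
      (0\<^sub>m b a * A2 + B1 * 0\<^sub>m b a) (0\<^sub>m b a * 0\<^sub>m a b + B1 * B2)"
    by (rule mult_four_block_mat) (use assms in auto)
  also have "\<dots> = diag_block (A1 * A2) (B1 * B2)"
    using assms by (simp add: diag_block_def)
  finally show ?thesis .
qed

lemma diag_block_one: "diag_block (1\<^sub>m a) (1\<^sub>m b) = (1\<^sub>m (a + b) :: 'a :: semiring_1 mat)"
  by (simp add: diag_block_def)

lemma mat_adjoint_diag_block:
  fixes A B :: "complex mat"
  assumes "A \<in> carrier_mat a a" "B \<in> carrier_mat b b"
  shows "mat_adjoint (diag_block A B) = diag_block (mat_adjoint A) (mat_adjoint B)"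
proof -
  have dims: "dim_row A = a" "dim_col A = a" "dim_row B = b" "dim_col B = b"
    using assms by auto
  show ?thesis by (intro eq_matI) (auto simp: diag_block_def dims)
qed

lemma diagonal_mat_diag_block:
  assumes "A \<in> carrier_mat a a" "B \<in> carrier_mat b b" "diagonal_mat A" "diagonal_mat B"
  shows "diagonal_mat (diag_block A B)"
  using assms by (auto simp: diagonal_mat_def diag_block_def)

lemma unitary_diag_block:
  assumes "unitary a U" "unitary b V"
  shows "unitary (a + b) (diag_block U V)"
proof (rule unitaryI)
  have U: "U \<in> carrier_mat a a" "mat_adjoint U * U = 1\<^sub>m a"
    and V: "V \<in> carrier_mat b b" "mat_adjoint V * V = 1\<^sub>m b"
    using assms by (auto simp: unitary_def)
  show "diag_block U V \<in> carrier_mat (a + b) (a + b)" using U V by simp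
  show "mat_adjoint (diag_block U V) * diag_block U V = 1\<^sub>m (a + b)"
    using U V
    by (simp add: mat_adjoint_diag_block diag_block_mult[where a = a and b = b] diag_block_one)
qed

section \<open>Biorthogonal systems\<close>

lemma (in vec_space) scalar_prod_lincomb:
  assumes "finite A" "A \<subseteq> carrier_vec n"
  shows "w \<bullet> lincomb a A = (\<Sum>x\<in>A. a x * (w \<bullet> x))"
proof -
  have "w \<bullet> lincomb a A = (\<Sum>i<n. \<Sum>x\<in>A. w $ i * (a x * x $ i))"
    using assms by (auto simp: scalar_prod_def lincomb_index lincomb_dim lessThan_atLeast0
        sum_distrib_left intro!: sum.cong)
  also have "\<dots> = (\<Sum>x\<in>A. a x * (\<Sum>i<n. w $ i * x $ i))"
    by (subst sum.swap) (auto simp: sum_distrib_left ac_simps intro!: sum.cong)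
  also have "\<dots> = (\<Sum>x\<in>A. a x * (w \<bullet> x))"
    using assms by (intro sum.cong) (auto simp: scalar_prod_def lessThan_atLeast0)
  finally show ?thesis .
qed

lemma (in vec_space) lin_indpt_if_biorthogonal:
  assumes S: "S \<subseteq> carrier_vec n"
    and dual: "\<And>x y. x \<in> S \<Longrightarrow> y \<in> S \<Longrightarrow> w y \<bullet> x = 0 \<longleftrightarrow> x \<noteq> y"
  shows "lin_indpt S"
proof
  assume "lin_dep S"
  then obtain A a v where A: "finite A" "A \<subseteq> S" and lc: "lincomb a A = 0\<^sub>v n"
    and v: "v \<in> A" "a v \<noteq> 0"
    unfolding lin_dep_def by (auto simp: class_ring_simps module_vec_simps)
  have "0 = w v \<bullet> lincomb a A"
    unfolding lc by (simp add: scalar_prod_def)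
  also have "\<dots> = (\<Sum>x\<in>A. a x * (w v \<bullet> x))"
    using A S by (intro scalar_prod_lincomb) auto
  also have "\<dots> = (\<Sum>x\<in>A. if x = v then a v * (w v \<bullet> v) else 0)"
    using A dual v by (intro sum.cong) auto
  also have "\<dots> = a v * (w v \<bullet> v)"
    using A v by simp
  finally show False using v A dual by auto
qed

lemma card_le_card_if_biorthogonal:
  fixes v w :: "'h \<Rightarrow> 'i \<Rightarrow> 'a :: field"
  assumes I: "finite I"
    and dual: "\<And>\<alpha> \<beta>. \<alpha> \<in> H \<Longrightarrow> \<beta> \<in> H \<Longrightarrow> (\<Sum>t\<in>I. w \<beta> t * v \<alpha> t) = 0 \<longleftrightarrow> \<alpha> \<noteq> \<beta>"
  shows "card H \<le> card I"
proof -
  define N where "N = card I"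
  obtain g where g: "bij_betw g {..<N} I"
    using ex_bij_betw_nat_finite[OF I] unfolding N_def lessThan_atLeast0 by blast
  define vv where "vv \<alpha> = vec N (\<lambda>t. v \<alpha> (g t))" for \<alpha>
  define ww where "ww \<beta> = vec N (\<lambda>t. w \<beta> (g t))" for \<beta>
  have pairing: "ww \<beta> \<bullet> vv \<alpha> = (\<Sum>t\<in>I. w \<beta> t * v \<alpha> t)" for \<alpha> \<beta>
  proof -
    have "ww \<beta> \<bullet> vv \<alpha> = (\<Sum>t<N. w \<beta> (g t) * v \<alpha> (g t))"
      by (simp add: vv_def ww_def scalar_prod_def lessThan_atLeast0)
    also have "\<dots> = (\<Sum>t\<in>I. w \<beta> t * v \<alpha> t)"
      by (rule sum.reindex_bij_betw[OF g])
    finally show ?thesis .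
  qed
  have inj: "inj_on vv H"
  proof (rule inj_onI)
    fix \<alpha> \<beta> assume a: "\<alpha> \<in> H" and b: "\<beta> \<in> H" and eq: "vv \<alpha> = vv \<beta>"
    have "ww \<beta> \<bullet> vv \<alpha> \<noteq> 0" unfolding eq pairing using dual[OF b b] by simp
    then show "\<alpha> = \<beta>" unfolding pairing using dual[OF a b] by simp
  qed
  interpret vec_space "TYPE('a)" N .
  have carrier: "vv ` H \<subseteq> carrier_vec N" by (auto simp: vv_def)
  have "lin_indpt (vv ` H)"
  proof (rule lin_indpt_if_biorthogonal[OF carrier])
    fix x y assume "x \<in> vv ` H" "y \<in> vv ` H"
    then obtain \<alpha> \<beta> where a: "\<alpha> \<in> H" "x = vv \<alpha>" and b: "\<beta> \<in> H" "y = vv \<beta>" by blast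
    have "inv_into H vv y = \<beta>" using b inj by (simp add: inv_into_f_f)
    moreover have "x = y \<longleftrightarrow> \<alpha> = \<beta>" using a b inj by (auto simp: inj_on_eq_iff)
    ultimately show "ww (inv_into H vv y) \<bullet> x = 0 \<longleftrightarrow> x \<noteq> y"
      unfolding a(2) pairing using dual[OF a(1) b(1)] by simp
  qed
  then have "card (vv ` H) \<le> N"
    using li_le_dim(2)[OF fin_dim carrier] dim_is_n by simp
  then show ?thesis using card_image[OF inj] unfolding N_def by simp
qed

section \<open>Spectral theorem for Hermitian matrices\<close>

lemma unitary_of_corthogonal:
  fixes ws :: "complex vec list"
  assumes ws: "set ws \<subseteq> carrier_vec n" "corthogonal ws" "length ws = n"
  defines "W \<equiv> mat n n (\<lambda>(k, i). ws ! i $ k / complex_of_real (sqrt (Re (ws ! i \<bullet>c ws ! i))))"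
  shows "unitary n W"
proof (rule unitaryI)
  define s where "s i = Re (ws ! i \<bullet>c ws ! i)" for i
  have s: "0 < s i" "ws ! i \<bullet>c ws ! i = complex_of_real (s i)" if "i < n" for i
  proof -
    have "ws ! i \<bullet>c ws ! i \<ge> 0" "ws ! i \<bullet>c ws ! i \<noteq> 0"
      using corthogonalD[OF ws(2)] that ws(3) by auto
    then show "0 < s i" "ws ! i \<bullet>c ws ! i = complex_of_real (s i)"
      unfolding s_def by (auto simp: less_eq_complex_def complex_eq_iff)
  qed
  show "W \<in> carrier_mat n n" unfolding W_def by simp
  show "mat_adjoint W * W = 1\<^sub>m n"
  proof (rule eq_matI)
    fix i j assume "i < dim_row (1\<^sub>m n)" "j < dim_col (1\<^sub>m n)"
    then have i: "i < n" and j: "j < n" by auto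
    have "(mat_adjoint W * W) $$ (i, j)
        = (\<Sum>k<n. ws ! j $ k * cnj (ws ! i $ k)) / complex_of_real (sqrt (s i) * sqrt (s j))"
      using i j by (auto simp: W_def s_def scalar_prod_def lessThan_atLeast0 sum_divide_distrib
          ac_simps intro!: sum.cong)
    also have "(\<Sum>k<n. ws ! j $ k * cnj (ws ! i $ k)) = ws ! j \<bullet>c ws ! i"
    proof -
      have "dim_vec (ws ! i) = n" using ws(1,3) i by (metis carrier_vecD nth_mem subsetD)
      then show ?thesis by (simp add: scalar_prod_def lessThan_atLeast0)
    qed
    also have "\<dots> / complex_of_real (sqrt (s i) * sqrt (s j)) = 1\<^sub>m n $$ (i, j)"
    proof (cases "i = j")
      case True
      with s[OF i] show ?thesis using i by (simp flip: of_real_mult)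
    next
      case False
      with corthogonalD[OF ws(2)] i j ws(3) show ?thesis by auto
    qed
    finally show "(mat_adjoint W * W) $$ (i, j) = 1\<^sub>m n $$ (i, j)" .
  qed (simp_all add: W_def)
qed

lemma unitary_with_first_col:
  fixes v :: "complex vec"
  assumes v: "v \<in> carrier_vec n" "v \<noteq> 0\<^sub>v n"
  obtains W c where "unitary n W" "col W 0 = c \<cdot>\<^sub>v v"
proof -
  interpret cof_vec_space n "TYPE(complex)" .
  define b where "b = basis_completion v"
  from basis_completion[OF v, folded b_def]
  have b: "set b \<subseteq> carrier_vec n" "distinct b" "\<not> lin_dep (set b)" "hd b = v" "length b = n"
    by auto
  have "n \<noteq> 0" using v by (auto intro: eq_vecI)
  with b obtain vs where b_Cons: "b = v # vs" by (cases b) auto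
  define ws where "ws = gram_schmidt n b"
  have ws: "set ws \<subseteq> carrier_vec n" "corthogonal ws" "length ws = n"
    using gram_schmidt_result[OF b(1-3) ws_def] b(5) by auto
  have "hd ws = v" unfolding ws_def b_Cons using v(1) by (rule gram_schmidt_hd)
  with \<open>n \<noteq> 0\<close> ws(3) have ws_0: "ws ! 0 = v" by (cases ws) auto
  define W where "W = mat n n (\<lambda>(k, i). ws ! i $ k / complex_of_real (sqrt (Re (ws ! i \<bullet>c ws ! i))))"
  have "unitary n W" unfolding W_def using ws by (rule unitary_of_corthogonal)
  moreover have "col W 0 = (1 / complex_of_real (sqrt (Re (v \<bullet>c v)))) \<cdot>\<^sub>v v"
    using v(1) \<open>n \<noteq> 0\<close> by (intro eq_vecI) (auto simp: W_def ws_0)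
  ultimately show ?thesis by (rule that)
qed

lemma eigenvector_exists:
  fixes A :: "complex mat"
  assumes A: "A \<in> carrier_mat n n" and "0 < n"
  obtains e v where "v \<in> carrier_vec n" "v \<noteq> 0\<^sub>v n" "A *\<^sub>v v = e \<cdot>\<^sub>v v"
proof -
  obtain as where cp: "char_poly A = (\<Prod>a\<leftarrow>as. [:- a, 1:])" and "length as = n"
    using char_poly_factorized[OF A] by blast
  with \<open>0 < n\<close> obtain e es where "as = e # es" by (cases as) auto
  then have "eigenvalue A e" unfolding eigenvalue_root_char_poly[OF A] cp by simp
  then show ?thesis using A that unfolding eigenvalue_def eigenvector_def by auto
qed

lemma hermitian_diag_block_of_first_col:
  fixes A :: "complex mat"
  assumes A: "A \<in> carrier_mat (Suc m) (Suc m)" "mat_adjoint A = A"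
    and col0: "\<And>i. i < Suc m \<Longrightarrow> A $$ (i, 0) = (if i = 0 then e else 0)"
  defines "B \<equiv> mat m m (\<lambda>(i, j). A $$ (Suc i, Suc j))"
  shows "A = diag_block (mat 1 1 (\<lambda>_. e)) B" and "mat_adjoint B = B"
proof -
  have row0: "A $$ (0, j) = (if j = 0 then e else 0)" if j: "j < Suc m" for j
    using col0[OF j] j A index_mat_adjoint[of 0 A j] by (cases "j = 0") auto
  have B: "B \<in> carrier_mat m m" unfolding B_def by simp
  show "A = diag_block (mat 1 1 (\<lambda>_. e)) B"
  proof (rule eq_matI)
    fix i j assume "i < dim_row (diag_block (mat 1 1 (\<lambda>_. e)) B)"
      "j < dim_col (diag_block (mat 1 1 (\<lambda>_. e)) B)"
    then have "i < Suc m" "j < Suc m" using B by (simp_all add: diag_block_def)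
    then show "A $$ (i, j) = diag_block (mat 1 1 (\<lambda>_. e)) B $$ (i, j)"
      using B col0 row0 by (cases i; cases j) (auto simp: diag_block_def B_def)
  qed (use A B in \<open>simp_all add: diag_block_def\<close>)
  show "mat_adjoint B = B"
  proof (rule eq_matI)
    fix i j assume "i < dim_row B" "j < dim_col B"
    then show "mat_adjoint B $$ (i, j) = B $$ (i, j)"
      using A index_mat_adjoint[of "Suc i" A "Suc j"] by (simp add: B_def)
  qed (simp_all add: B_def)
qed

lemma hermitian_deflation:
  fixes A :: "complex mat"
  assumes A: "A \<in> carrier_mat (Suc m) (Suc m)" and herm: "mat_adjoint A = A"
  obtains W e B where "unitary (Suc m) W" "B \<in> carrier_mat m m" "mat_adjoint B = B"
    "A = W * diag_block (mat 1 1 (\<lambda>_. e)) B * mat_adjoint W"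
proof -
  let ?n = "Suc m"
  obtain e v where v: "v \<in> carrier_vec ?n" "v \<noteq> 0\<^sub>v ?n" and ev: "A *\<^sub>v v = e \<cdot>\<^sub>v v"
    using eigenvector_exists[OF A] by blast
  obtain W c where uW: "unitary ?n W" and W0: "col W 0 = c \<cdot>\<^sub>v v"
    using unitary_with_first_col[OF v] by blast
  have W: "W \<in> carrier_mat ?n ?n" "mat_adjoint W * W = 1\<^sub>m ?n" "W * mat_adjoint W = 1\<^sub>m ?n"
    using uW by (auto simp: unitary_def)
  define A' where "A' = mat_adjoint W * (A * W)"
  have A': "A' \<in> carrier_mat ?n ?n"
    unfolding A'_def using A W by (meson mat_adjoint_carrier mult_carrier_mat)
  have herm': "mat_adjoint A' = A'"
    unfolding A'_def using A W herm
    by (simp add: mat_adjoint_mult[of _ ?n ?n _ ?n] mult_carrier_mat[of _ ?n ?n]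
        assoc_mult_mat[of _ ?n ?n _ ?n _ ?n])
  have "A' $$ (i, 0) = (if i = 0 then e else 0)" if i: "i < ?n" for i
  proof -
    have "col (A * W) 0 = A *\<^sub>v col W 0" by (rule col_mult2[OF A W(1)]) simp
    also have "\<dots> = e \<cdot>\<^sub>v col W 0"
      unfolding W0 using A v ev by (simp add: mult_mat_vec smult_smult_assoc mult.commute)
    finally have "A' $$ (i, 0) = e * (mat_adjoint W * W) $$ (i, 0)"
      unfolding A'_def using i A W(1) by simp
    then show ?thesis unfolding W(2) using i by simp
  qed
  note A'_block = hermitian_diag_block_of_first_col[OF A' herm' this]
  have "A = W * A' * mat_adjoint W"
    unfolding A'_def using A W
    by (simp add: assoc_mult_mat[of _ ?n ?n _ ?n _ ?n]
        flip: assoc_mult_mat[of W ?n ?n "mat_adjoint W" ?n _ ?n])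
  then show ?thesis
    using that[OF uW, where e = e and B = "mat m m (\<lambda>(i, j). A' $$ (Suc i, Suc j))"] A'_block by simp
qed

theorem hermitian_unitary_diagonalization:
  fixes A :: "complex mat"
  assumes "A \<in> carrier_mat n n" "mat_adjoint A = A"
  obtains U D where "unitary n U" "D \<in> carrier_mat n n" "diagonal_mat D" "A = U * D * mat_adjoint U"
  using assms
proof (induction n arbitrary: A thesis)
  case 0
  then have "A = 1\<^sub>m 0 * A * mat_adjoint (1\<^sub>m 0)" "diagonal_mat A"
    by (auto simp: diagonal_mat_def intro!: eq_matI)
  with 0 unitary_one show ?case by blast
next
  case (Suc m)
  obtain W e B where W: "unitary (Suc m) W" and B: "B \<in> carrier_mat m m" "mat_adjoint B = B"
    and A: "A = W * diag_block (mat 1 1 (\<lambda>_. e)) B * mat_adjoint W"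
    using hermitian_deflation[OF Suc.prems(2,3)] by blast
  obtain U' D' where U': "unitary m U'" and D': "D' \<in> carrier_mat m m" "diagonal_mat D'"
    and B_eq: "B = U' * D' * mat_adjoint U'"
    using Suc.IH[OF _ B] by blast
  define U1 where "U1 = diag_block (1\<^sub>m 1) U'"
  define D where "D = diag_block (mat 1 1 (\<lambda>_. e)) D'"
  have U1: "unitary (Suc m) U1"
    unfolding U1_def using unitary_diag_block[OF unitary_one[of 1] U'] by simp
  have U'c: "U' \<in> carrier_mat m m" using U' by (rule unitary_carrier)
  have e: "mat 1 1 (\<lambda>_. e) \<in> carrier_mat 1 1" "diagonal_mat (mat 1 1 (\<lambda>_. e))"
    by (auto simp: diagonal_mat_def)
  have D: "D \<in> carrier_mat (Suc m) (Suc m)" "diagonal_mat D"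
    unfolding D_def
    using diag_block_carrier[OF e(1) D'(1)] diagonal_mat_diag_block[OF e(1) D'(1) e(2) D'(2)]
    by simp_all
  have "diag_block (mat 1 1 (\<lambda>_. e)) B = U1 * D * mat_adjoint U1"
    using U'c D' unfolding U1_def D_def B_eq
    by (simp add: mat_adjoint_diag_block[of _ 1 _ m] diag_block_mult[where a = 1 and b = m])
  moreover have "W \<in> carrier_mat (Suc m) (Suc m)" "U1 \<in> carrier_mat (Suc m) (Suc m)"
    using W U1 by (simp_all add: unitary_carrier)
  ultimately have "A = (W * U1) * D * mat_adjoint (W * U1)"
    using A D
    by (simp add: mat_adjoint_mult[of _ "Suc m" "Suc m"] mult_carrier_mat[of _ "Suc m" "Suc m"]
        assoc_mult_mat[of _ "Suc m" "Suc m" _ "Suc m" _ "Suc m"])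
  with unitary_mult[OF W U1] D show ?case by (rule Suc.prems(1))
qed

section \<open>Rank of a diagonalisable matrix\<close>

lemma mult_diagonal_mat_index:
  fixes D :: "'a :: semiring_0 mat"
  assumes "A \<in> carrier_mat m n" "D \<in> carrier_mat n n" "diagonal_mat D" "i < m" "k < n"
  shows "(A * D) $$ (i, k) = A $$ (i, k) * D $$ (k, k)"
proof -
  have "(A * D) $$ (i, k) = (\<Sum>l<n. A $$ (i, l) * D $$ (l, k))"
    using assms by (simp add: scalar_prod_def lessThan_atLeast0)
  also have "\<dots> = (\<Sum>l<n. if l = k then A $$ (i, k) * D $$ (k, k) else 0)"
    using assms by (intro sum.cong) (auto simp: diagonal_mat_def)
  finally show ?thesis using assms by simp
qed

lemma index_mult_diagonal_mult:
  fixes D :: "'a :: comm_semiring_0 mat"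
  assumes P: "P \<in> carrier_mat n n" and D: "D \<in> carrier_mat n n" "diagonal_mat D"
    and Q: "Q \<in> carrier_mat n n" and i: "i < n" and j: "j < n"
  shows "(P * D * Q) $$ (i, j) = (\<Sum>k<n. P $$ (i, k) * D $$ (k, k) * Q $$ (k, j))"
proof -
  have "(P * D * Q) $$ (i, j) = row (P * D) i \<bullet> col Q j"
    using P D Q i j by (intro index_mult_mat(1)) auto
  also have "\<dots> = (\<Sum>k<n. (P * D) $$ (i, k) * Q $$ (k, j))"
    using P D Q i j by (auto simp: scalar_prod_def lessThan_atLeast0 intro!: sum.cong)
  also have "\<dots> = (\<Sum>k<n. P $$ (i, k) * D $$ (k, k) * Q $$ (k, j))"
    using mult_diagonal_mat_index[OF P D i] by simp
  finally show ?thesis .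
qed

lemma mult_diagonal_mult_col:
  fixes D :: "'a :: field mat"
  assumes P: "P \<in> carrier_mat n n" and D: "D \<in> carrier_mat n n" "diagonal_mat D"
    and Q: "Q \<in> carrier_mat n n" "Q * P = 1\<^sub>m n" and k: "k < n"
  shows "(P * D * Q) *\<^sub>v col P k = D $$ (k, k) \<cdot>\<^sub>v col P k"
proof -
  have "P * D * Q * P = P * D * (Q * P)"
    using P D Q by (intro assoc_mult_mat) auto
  also have "\<dots> = P * D" using P D Q by simp
  finally have "(P * D * Q) *\<^sub>v col P k = col (P * D) k"
    using P D Q k by (metis col_mult2 mult_carrier_mat)
  also have "\<dots> = D $$ (k, k) \<cdot>\<^sub>v col P k"
  proof (rule eq_vecI)
    fix i assume "i < dim_vec (D $$ (k, k) \<cdot>\<^sub>v col P k)"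
    then have i: "i < n" using P by simp
    have "col (P * D) k $ i = (P * D) $$ (i, k)" by (rule index_col) (use P D i k in simp_all)
    then show "col (P * D) k $ i = (D $$ (k, k) \<cdot>\<^sub>v col P k) $ i"
      using mult_diagonal_mat_index[OF P D i k] P i k by simp
  qed (use P D in simp)
  finally show ?thesis .
qed

context vec_space
begin

lemma rank_eq_card_if_span_eq_col_space:
  assumes "B \<subseteq> carrier_vec n" "finite B" "lin_indpt B" "span B = col_space A"
  shows "rank A = card B"
proof -
  have "maximal B (\<lambda>T. T \<subseteq> B \<and> lin_indpt T)"
    using assms(3) by (auto simp: maximal_def)
  with assms show ?thesis
    unfolding rank_def by (simp flip: col_space_def dim_span[OF assms(1,2)])
qed

lemma cols_of_left_invertible:
  assumes P: "P \<in> carrier_mat n n" and Q: "Q \<in> carrier_mat n n" "Q * P = 1\<^sub>m n"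
  shows "inj_on (col P) {..<n}" and "S \<subseteq> {..<n} \<Longrightarrow> lin_indpt (col P ` S)"
proof -
  have dual: "row Q a \<bullet> col P b = (if a = b then 1 else 0)" if "a < n" "b < n" for a b
  proof -
    have "row Q a \<bullet> col P b = (Q * P) $$ (a, b)" using P Q(1) that by simp
    also have "\<dots> = 1\<^sub>m n $$ (a, b)" unfolding Q(2) ..
    finally show ?thesis using that by simp
  qed
  show inj: "inj_on (col P) {..<n}"
    by (rule inj_onI) (metis dual lessThan_iff one_neq_zero)
  assume S: "S \<subseteq> {..<n}"
  show "lin_indpt (col P ` S)"
  proof (rule lin_indpt_if_biorthogonal[where w = "\<lambda>y. row Q (inv_into {..<n} (col P) y)"])
    show "col P ` S \<subseteq> carrier_vec n" using S P by auto
    fix x y assume "x \<in> col P ` S" "y \<in> col P ` S"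
    then show "row Q (inv_into {..<n} (col P) y) \<bullet> x = 0 \<longleftrightarrow> x \<noteq> y"
      using S dual inj by (auto simp: inv_into_f_f subset_iff)
  qed
qed

lemma col_mult_diagonal_mult_in_span:
  assumes P: "P \<in> carrier_mat n n" and D: "D \<in> carrier_mat n n" "diagonal_mat D"
    and Q: "Q \<in> carrier_mat n n" "Q * P = 1\<^sub>m n" and j: "j < n"
  shows "col (P * D * Q) j \<in> span (col P ` {k. k < n \<and> D $$ (k, k) \<noteq> 0})"
proof -
  define S where "S = {k. k < n \<and> D $$ (k, k) \<noteq> 0}"
  have inj: "inj_on (col P) S"
    using cols_of_left_invertible(1)[OF P Q] by (rule inj_on_subset) (auto simp: S_def)
  have B: "finite (col P ` S)" "col P ` S \<subseteq> carrier_vec n" using P by (auto simp: S_def)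
  define c where "c x = (let l = inv_into S (col P) x in D $$ (l, l) * Q $$ (l, j))" for x
  have "col (P * D * Q) j = lincomb c (col P ` S)"
  proof (rule eq_vecI)
    fix i assume "i < dim_vec (lincomb c (col P ` S))"
    then have i: "i < n" using lincomb_dim[OF B] by simp
    have "lincomb c (col P ` S) $ i = (\<Sum>l\<in>S. c (col P l) * col P l $ i)"
      unfolding lincomb_index[OF i B(2)] by (rule sum.reindex[OF inj, unfolded comp_def])
    also have "\<dots> = (\<Sum>l\<in>S. P $$ (i, l) * D $$ (l, l) * Q $$ (l, j))"
    proof (rule sum.cong[OF refl])
      fix l assume l: "l \<in> S"
      then have "inv_into S (col P) (col P l) = l" by (rule inv_into_f_f[OF inj])
      then show "c (col P l) * col P l $ i = P $$ (i, l) * D $$ (l, l) * Q $$ (l, j)"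
        using l i P by (simp add: c_def S_def Let_def mult.commute mult.left_commute)
    qed
    also have "\<dots> = (\<Sum>l<n. P $$ (i, l) * D $$ (l, l) * Q $$ (l, j))"
      by (rule sum.mono_neutral_left) (auto simp: S_def)
    also have "\<dots> = (P * D * Q) $$ (i, j)"
      using P D Q(1) i j by (rule index_mult_diagonal_mult[symmetric])
    finally show "col (P * D * Q) j $ i = lincomb c (col P ` S) $ i"
      using P D Q i j by simp
  qed (use P Q lincomb_dim[OF B] in simp)
  then show ?thesis using B unfolding S_def by blast
qed

lemma col_in_col_space_mult_diagonal_mult:
  assumes P: "P \<in> carrier_mat n n" and D: "D \<in> carrier_mat n n" "diagonal_mat D"
    and Q: "Q \<in> carrier_mat n n" "Q * P = 1\<^sub>m n" and k: "k < n" "D $$ (k, k) \<noteq> 0"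
  shows "col P k \<in> col_space (P * D * Q)"
proof -
  have PDQ: "P * D * Q \<in> carrier_mat n n" using P D Q(1) by simp
  have "(P * D * Q) *\<^sub>v ((1 / D $$ (k, k)) \<cdot>\<^sub>v col P k) = (1 / D $$ (k, k)) \<cdot>\<^sub>v ((P * D * Q) *\<^sub>v col P k)"
    by (rule mult_mat_vec[OF PDQ]) (use P k in simp)
  also have "\<dots> = col P k"
    unfolding mult_diagonal_mult_col[OF P D Q k(1)] using k(2) by (simp add: smult_smult_assoc)
  finally show ?thesis
    unfolding col_space_eq[OF PDQ] using PDQ P Q(1) k
    by (auto intro!: bexI[of _ "(1 / D $$ (k, k)) \<cdot>\<^sub>v col P k"])
qed

theorem rank_mult_diagonal_mult:
  assumes P: "P \<in> carrier_mat n n" and D: "D \<in> carrier_mat n n" "diagonal_mat D"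
    and Q: "Q \<in> carrier_mat n n" "Q * P = 1\<^sub>m n"
  shows "rank (P * D * Q) = card {k. k < n \<and> D $$ (k, k) \<noteq> 0}"
proof -
  define S where "S = {k. k < n \<and> D $$ (k, k) \<noteq> 0}"
  have S: "S \<subseteq> {..<n}" "finite S" by (auto simp: S_def)
  have PDQ: "P * D * Q \<in> carrier_mat n n" using P D Q(1) by simp
  have B: "col P ` S \<subseteq> carrier_vec n" using P S by auto
  have "span (col P ` S) = col_space (P * D * Q)"
  proof
    have "set (cols (P * D * Q)) \<subseteq> span (col P ` S)"
    proof
      fix x assume "x \<in> set (cols (P * D * Q))"
      then obtain j where "j < n" "x = col (P * D * Q) j" using PDQ by (auto simp: cols_def)
      then show "x \<in> span (col P ` S)"
        using col_mult_diagonal_mult_in_span[OF P D Q] unfolding S_def by simp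
    qed
    then show "col_space (P * D * Q) \<subseteq> span (col P ` S)"
      unfolding col_space_def by (rule span_subsetI[OF B])
    have "col P ` S \<subseteq> col_space (P * D * Q)"
    proof
      fix x assume "x \<in> col P ` S"
      then obtain k where "k < n" "D $$ (k, k) \<noteq> 0" "x = col P k" by (auto simp: S_def)
      then show "x \<in> col_space (P * D * Q)"
        using col_in_col_space_mult_diagonal_mult[OF P D Q] by blast
    qed
    then show "span (col P ` S) \<subseteq> col_space (P * D * Q)"
      unfolding col_space_def using PDQ Q(1) by (intro span_subsetI) (auto simp: cols_def)
  qed
  with B S cols_of_left_invertible(2)[OF P Q S(1)]
  have "rank (P * D * Q) = card (col P ` S)"
    by (intro rank_eq_card_if_span_eq_col_space) simp_all
  also have "\<dots> = card S"
    using inj_on_subset[OF cols_of_left_invertible(1)[OF P Q] S(1)] by (rule card_image)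
  finally show ?thesis unfolding S_def .
qed

end

corollary mat_rank_diag_conj:
  assumes "unitary n U" "D \<in> carrier_mat n n" "diagonal_mat D"
  shows "mat_rank n (U * D * mat_adjoint U) = card {k. k < n \<and> D $$ (k, k) \<noteq> 0}"
  unfolding mat_rank_def using assms
  by (intro vec_space.rank_mult_diagonal_mult) (auto simp: unitary_def)

section \<open>At most \<open>r\<Omega>\<close> histories of nonzero probability\<close>

lemma history_op_carrier:
  assumes "\<forall>Ps\<in>set \<sigma>. \<forall>P\<in>set Ps. P \<in> carrier_mat n n" and "\<alpha> \<in> histories \<sigma>"
  shows "history_op n \<sigma> \<alpha> \<in> carrier_mat n n"
  using assms
proof (induction \<sigma> arbitrary: \<alpha>)
  case Nil
  then show ?case by (simp add: history_op_def)
next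
  case (Cons Ps \<sigma>)
  then obtain a \<alpha>' where \<alpha>: "\<alpha> = a # \<alpha>'"
    by (cases \<alpha>) (auto simp: histories_def)
  with Cons.prems(2) have "a < length Ps" "\<alpha>' \<in> histories \<sigma>"
    by (force simp: histories_def)+
  have "history_op n (Ps # \<sigma>) \<alpha> = Ps ! a * history_op n \<sigma> \<alpha>'"
    unfolding \<alpha> by (simp add: history_op_def)
  with Cons \<alpha> \<open>a < length Ps\<close> \<open>\<alpha>' \<in> histories \<sigma>\<close> show ?case
    by (metis list.set_intros(1,2) mult_carrier_mat nth_mem)
qed

lemma family_carrier: "family n \<sigma> \<Longrightarrow> \<forall>Ps\<in>set \<sigma>. \<forall>P\<in>set Ps. P \<in> carrier_mat n n"
  unfolding family_def exh_excl_def projector_def hermitian_mat_def by blast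

lemma mtrace_adjoint_mult_diagonal:
  assumes X: "X \<in> carrier_mat n n" and Y: "Y \<in> carrier_mat n n"
    and D: "D \<in> carrier_mat n n" "diagonal_mat D"
  shows "mtrace (mat_adjoint X * D * Y) = (\<Sum>k<n. \<Sum>j<n. cnj (X $$ (k, j)) * D $$ (k, k) * Y $$ (k, j))"
proof -
  have XD: "mat_adjoint X * D \<in> carrier_mat n n"
    using X D by (meson mat_adjoint_carrier mult_carrier_mat)
  have "mtrace (mat_adjoint X * D * Y) = (\<Sum>j<n. \<Sum>k<n. (mat_adjoint X * D) $$ (j, k) * Y $$ (k, j))"
    using XD X Y by (auto simp: mtrace_def scalar_prod_def lessThan_atLeast0 intro!: sum.cong)
  also have "\<dots> = (\<Sum>j<n. \<Sum>k<n. cnj (X $$ (k, j)) * D $$ (k, k) * Y $$ (k, j))"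
  proof (intro sum.cong refl)
    fix j k assume "j \<in> {..<n}" "k \<in> {..<n}"
    then show "(mat_adjoint X * D) $$ (j, k) * Y $$ (k, j)
        = cnj (X $$ (k, j)) * D $$ (k, k) * Y $$ (k, j)"
      using mult_diagonal_mat_index[of "mat_adjoint X" n n D j k] X D by simp
  qed
  finally show ?thesis by (subst sum.swap)
qed

lemma mtrace_diag_conj:
  assumes U: "U \<in> carrier_mat n n" and D: "D \<in> carrier_mat n n" "diagonal_mat D"
    and C: "C \<in> carrier_mat n n" "C' \<in> carrier_mat n n"
  shows "mtrace (mat_adjoint C * (U * D * mat_adjoint U) * C') =
    (\<Sum>k<n. \<Sum>j<n. cnj ((mat_adjoint U * C) $$ (k, j)) * D $$ (k, k) * (mat_adjoint U * C') $$ (k, j))"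
proof -
  have "mat_adjoint C * (U * D * mat_adjoint U) * C'
      = mat_adjoint (mat_adjoint U * C) * D * (mat_adjoint U * C')"
    using U D C by (simp add: mat_adjoint_mult[of _ n n _ n] mult_carrier_mat[of _ n n]
        assoc_mult_mat[of _ n n _ n _ n])
  then show ?thesis
    using U D C by (simp add: mtrace_adjoint_mult_diagonal[of _ n] mult_carrier_mat[of _ n n])
qed

lemma coherence_diag_conj_eq_sum:
  assumes U: "U \<in> carrier_mat n n" and D: "D \<in> carrier_mat n n" "diagonal_mat D"
    and \<sigma>: "family n \<sigma>" and \<alpha>: "\<alpha> \<in> histories \<sigma>" and \<beta>: "\<beta> \<in> histories \<sigma>"
  defines "X \<equiv> \<lambda>\<gamma>. mat_adjoint U * history_op n \<sigma> \<gamma>"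
  shows "coherence n (U * D * mat_adjoint U) \<sigma> \<beta> \<alpha> =
    (\<Sum>(k, j)\<in>{k. k < n \<and> D $$ (k, k) \<noteq> 0} \<times> {..<n}.
      cnj (X \<beta> $$ (k, j)) * (D $$ (k, k) * X \<alpha> $$ (k, j)))"
proof -
  have C: "history_op n \<sigma> \<gamma> \<in> carrier_mat n n" if "\<gamma> \<in> histories \<sigma>" for \<gamma>
    using family_carrier[OF \<sigma>] that by (rule history_op_carrier)
  have "coherence n (U * D * mat_adjoint U) \<sigma> \<beta> \<alpha>
      = (\<Sum>k<n. \<Sum>j<n. cnj (X \<beta> $$ (k, j)) * D $$ (k, k) * X \<alpha> $$ (k, j))"
    unfolding coherence_def X_def using U D C[OF \<beta>] C[OF \<alpha>] by (rule mtrace_diag_conj)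
  also have "\<dots> = (\<Sum>k\<in>{k. k < n \<and> D $$ (k, k) \<noteq> 0}.
      \<Sum>j<n. cnj (X \<beta> $$ (k, j)) * D $$ (k, k) * X \<alpha> $$ (k, j))"
    by (rule sum.mono_neutral_right) auto
  finally show ?thesis
    by (simp add: sum.cartesian_product ac_simps)
qed

theorem card_nonzero_histories_le:
  assumes U: "unitary n U" and D: "D \<in> carrier_mat n n" "diagonal_mat D"
    and mc: "medium_consistent n (U * D * mat_adjoint U) \<sigma>"
  shows "card (nonzero_histories n (U * D * mat_adjoint U) \<sigma>) \<le> card {k. k < n \<and> D $$ (k, k) \<noteq> 0} * n"
proof -
  define \<rho> where "\<rho> = U * D * mat_adjoint U"
  define S where "S = {k. k < n \<and> D $$ (k, k) \<noteq> 0}"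
  define X where "X \<gamma> = mat_adjoint U * history_op n \<sigma> \<gamma>" for \<gamma>
  have \<sigma>: "family n \<sigma>" using mc by (simp add: medium_consistent_def)
  have "card (nonzero_histories n \<rho> \<sigma>) \<le> card (S \<times> {..<n})"
  proof (rule card_le_card_if_biorthogonal)
    show "finite (S \<times> {..<n})" by (simp add: S_def)
    fix \<alpha> \<beta> assume "\<alpha> \<in> nonzero_histories n \<rho> \<sigma>" "\<beta> \<in> nonzero_histories n \<rho> \<sigma>"
    then have hist: "\<alpha> \<in> histories \<sigma>" "\<beta> \<in> histories \<sigma>" and "hist_prob n \<rho> \<sigma> \<beta> \<noteq> 0"
      by (simp_all add: nonzero_histories_def)
    moreover have "coherence n \<rho> \<sigma> \<beta> \<alpha> = (if \<beta> = \<alpha> then hist_prob n \<rho> \<sigma> \<beta> else 0)"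
      using mc hist unfolding medium_consistent_def \<rho>_def by blast
    ultimately show "(\<Sum>t\<in>S \<times> {..<n}. (\<lambda>(k, j). cnj (X \<beta> $$ (k, j))) t
        * (\<lambda>(k, j). D $$ (k, k) * X \<alpha> $$ (k, j)) t) = 0 \<longleftrightarrow> \<alpha> \<noteq> \<beta>"
      using coherence_diag_conj_eq_sum[OF unitary_carrier[OF U] D \<sigma> hist]
      by (auto simp: \<rho>_def S_def X_def split_def)
  qed
  then show ?thesis unfolding \<rho>_def S_def by (simp add: card_cartesian_product)
qed

section \<open>Families with exactly \<open>r\<Omega>\<close> histories of nonzero probability\<close>

definition col_projector :: "nat \<Rightarrow> complex mat \<Rightarrow> nat \<Rightarrow> complex mat" where
  "col_projector n W i = mat n n (\<lambda>(a, b). W $$ (a, i) * cnj (W $$ (b, i)))"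

lemma col_projector_carrier [simp]: "col_projector n W i \<in> carrier_mat n n"
  and dim_row_col_projector [simp]: "dim_row (col_projector n W i) = n"
  and dim_col_col_projector [simp]: "dim_col (col_projector n W i) = n"
  by (simp_all add: col_projector_def)

lemma index_col_projector [simp]:
  "a < n \<Longrightarrow> b < n \<Longrightarrow> col_projector n W i $$ (a, b) = W $$ (a, i) * cnj (W $$ (b, i))"
  by (simp add: col_projector_def)

lemma mat_adjoint_col_projector: "mat_adjoint (col_projector n W i) = col_projector n W i"
  by (rule eq_matI) auto

lemma col_projector_mult:
  assumes W: "unitary n W" and a: "a < n" and b: "b < n"
  shows "col_projector n W a * col_projector n W b = (if a = b then col_projector n W a else 0\<^sub>m n n)"
proof (rule eq_matI)
  fix x y assume "x < dim_row (if a = b then col_projector n W a else 0\<^sub>m n n)"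
    "y < dim_col (if a = b then col_projector n W a else 0\<^sub>m n n)"
  then have x: "x < n" and y: "y < n" by (auto split: if_splits)
  have "(col_projector n W a * col_projector n W b) $$ (x, y)
      = W $$ (x, a) * cnj (W $$ (y, b)) * (\<Sum>k<n. cnj (W $$ (k, a)) * W $$ (k, b))"
    using x y
    by (auto simp: scalar_prod_def lessThan_atLeast0 sum_distrib_left ac_simps intro!: sum.cong)
  then show "(col_projector n W a * col_projector n W b) $$ (x, y)
      = (if a = b then col_projector n W a else 0\<^sub>m n n) $$ (x, y)"
    using unitary_cols_orthonormal[OF W a b] x y by simp
qed auto

lemma foldr_plus_mat:
  fixes Ms :: "'a :: monoid_add mat list"
  assumes "\<forall>M\<in>set Ms. M \<in> carrier_mat n m"
  shows "foldr (+) Ms (0\<^sub>m n m) = mat n m (\<lambda>ij. \<Sum>M\<leftarrow>Ms. M $$ ij)"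
  using assms by (induction Ms) (auto intro!: eq_matI)

lemma exh_excl_col_projectors:
  assumes W: "unitary n W"
  shows "exh_excl n (map (col_projector n W) [0..<n])"
  unfolding exh_excl_def
proof (intro conjI ballI allI impI)
  fix P assume "P \<in> set (map (col_projector n W) [0..<n])"
  then obtain i where "i < n" "P = col_projector n W i" by auto
  then show "projector n P"
    unfolding projector_def hermitian_mat_def
    using col_projector_mult[OF W] by (simp add: mat_adjoint_col_projector)
next
  have Wc: "W \<in> carrier_mat n n" and W1: "W * mat_adjoint W = 1\<^sub>m n"
    using W by (auto simp: unitary_def)
  have "mat n n (\<lambda>ij. \<Sum>P\<leftarrow>map (col_projector n W) [0..<n]. P $$ ij) = W * mat_adjoint W"
    using Wc by (auto simp: sum_list_sum_nth scalar_prod_def lessThan_atLeast0 intro!: eq_matI sum.cong)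
  then show "foldr (+) (map (col_projector n W) [0..<n]) (0\<^sub>m n n) = 1\<^sub>m n"
    unfolding W1 by (subst foldr_plus_mat) auto
next
  fix a b
  assume "a < length (map (col_projector n W) [0..<n])" "b < length (map (col_projector n W) [0..<n])"
  then show "map (col_projector n W) [0..<n] ! a * map (col_projector n W) [0..<n] ! b =
      (if a = b then map (col_projector n W) [0..<n] ! a else 0\<^sub>m n n)"
    using col_projector_mult[OF W] by simp
qed

lemma exh_excl_one: "exh_excl n [1\<^sub>m n]"
  unfolding exh_excl_def projector_def hermitian_mat_def by simp

lemma unitary_with_nonzero_entries:
  assumes "0 < n"
  obtains F where "unitary n F" "\<And>a b. a < n \<Longrightarrow> b < n \<Longrightarrow> F $$ (a, b) \<noteq> 0"
proof -
  \<comment> \<open>\<open>F = 1 - c J\<close> with \<open>J\<close> the all-ones matrix; since \<open>J\<^sup>2 = n J\<close>, \<open>F\<close> is unitary iff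
    \<open>c + cnj c = n * c * cnj c\<close>, and \<open>c = (1 + \<i>) / n\<close> makes every entry nonzero.\<close>
  define c where "c = Complex (1 / real n) (1 / real n)"
  define F where "F = mat n n (\<lambda>(a, b). (if a = b then 1 else 0) - c)"
  have F: "F \<in> carrier_mat n n" unfolding F_def by simp
  have c: "of_nat n * (cnj c * c) - cnj c - c = 0"
    using assms by (simp add: c_def complex_eq_iff field_simps)
  have "mat_adjoint F * F = 1\<^sub>m n"
  proof (rule eq_matI)
    fix a b assume "a < dim_row (1\<^sub>m n)" "b < dim_col (1\<^sub>m n)"
    then have a: "a < n" and b: "b < n" by auto
    have "(mat_adjoint F * F) $$ (a, b) = (\<Sum>k<n. cnj (F $$ (k, a)) * F $$ (k, b))"
      using a b F by (simp add: scalar_prod_def lessThan_atLeast0)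
    also have "\<dots> = (\<Sum>k<n. (if k = a then 1 else 0) * (if k = b then 1 else 0)
        - (if k = b then cnj c else 0) - (if k = a then c else 0) + cnj c * c)"
      by (rule sum.cong) (auto simp: F_def a b algebra_simps)
    also have "\<dots> = (if a = b then 1 else 0) - cnj c - c + of_nat n * (cnj c * c)"
      using a b by (simp add: sum.distrib sum_subtractf if_distrib[of "\<lambda>x. x * _"] cong: if_cong)
    also have "\<dots> = 1\<^sub>m n $$ (a, b)" using c a b by (simp add: algebra_simps)
    finally show "(mat_adjoint F * F) $$ (a, b) = 1\<^sub>m n $$ (a, b)" .
  qed (use F in auto)
  moreover have "F $$ (a, b) \<noteq> 0" if "a < n" "b < n" for a b
    using that assms by (auto simp: F_def c_def complex_eq_iff)
  ultimately show ?thesis using F that unitaryI by blast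
qed

definition two_basis_family :: "nat \<Rightarrow> complex mat \<Rightarrow> complex mat \<Rightarrow> nat \<Rightarrow> complex mat list list" where
  "two_basis_family n U V m =
    [map (col_projector n U) [0..<n], map (col_projector n V) [0..<n]] @ replicate m [1\<^sub>m n]"

definition two_basis_history :: "nat \<Rightarrow> nat \<Rightarrow> nat \<Rightarrow> nat list" where
  "two_basis_history m i j = [i, j] @ replicate m 0"

lemma family_two_basis_family:
  "unitary n U \<Longrightarrow> unitary n V \<Longrightarrow> family n (two_basis_family n U V m)"
  unfolding family_def two_basis_family_def using exh_excl_col_projectors exh_excl_one by auto

lemma histories_two_basis_family:
  "histories (two_basis_family n U V m) = (\<lambda>(i, j). two_basis_history m i j) ` ({..<n} \<times> {..<n})"
proof (intro equalityI subsetI)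
  fix \<alpha> assume "\<alpha> \<in> histories (two_basis_family n U V m)"
  then have len: "length \<alpha> = Suc (Suc m)"
    and lt: "\<And>k. k < Suc (Suc m) \<Longrightarrow> \<alpha> ! k < length (two_basis_family n U V m ! k)"
    unfolding histories_def two_basis_family_def by auto
  have "\<alpha> = two_basis_history m (\<alpha> ! 0) (\<alpha> ! 1)"
  proof (rule nth_equalityI)
    show "length \<alpha> = length (two_basis_history m (\<alpha> ! 0) (\<alpha> ! 1))"
      using len by (simp add: two_basis_history_def)
    fix k assume k: "k < length \<alpha>"
    consider "k = 0" | "k = 1" | "2 \<le> k" by linarith
    then show "\<alpha> ! k = two_basis_history m (\<alpha> ! 0) (\<alpha> ! 1) ! k"
    proof cases
      case 3
      then show ?thesis
        using lt[of k] k len by (simp add: two_basis_family_def two_basis_history_def nth_append)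
    qed (simp_all add: two_basis_history_def)
  qed
  moreover have "\<alpha> ! 0 < n" "\<alpha> ! 1 < n"
    using lt[of 0] lt[of 1] by (simp_all add: two_basis_family_def)
  ultimately show "\<alpha> \<in> (\<lambda>(i, j). two_basis_history m i j) ` ({..<n} \<times> {..<n})" by force
next
  fix \<alpha> assume "\<alpha> \<in> (\<lambda>(i, j). two_basis_history m i j) ` ({..<n} \<times> {..<n})"
  then show "\<alpha> \<in> histories (two_basis_family n U V m)"
    by (auto simp: histories_def two_basis_family_def two_basis_history_def nth_append nth_Cons'
        less_Suc_eq)
qed

lemma history_op_two_basis_family:
  assumes "i < n" "j < n"
  shows "history_op n (two_basis_family n U V m) (two_basis_history m i j)
    = col_projector n U i * col_projector n V j"
proof -
  have "foldr (\<lambda>(Ps, a) acc. Ps ! a * acc) (zip (replicate m [1\<^sub>m n]) (replicate m 0)) (1\<^sub>m n)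
      = (1\<^sub>m n :: complex mat)"
    by (induction m) simp_all
  then show ?thesis
    using assms by (simp add: history_op_def two_basis_family_def two_basis_history_def)
qed

lemma adjoint_mult_col_projectors_index:
  assumes U: "unitary n U" and V: "V \<in> carrier_mat n n" and "i < n" "j < n" "k < n" "y < n"
  shows "(mat_adjoint U * (col_projector n U i * col_projector n V j)) $$ (k, y)
    = (if k = i then (mat_adjoint U * V) $$ (i, j) * cnj (V $$ (y, j)) else 0)"
proof -
  define G where "G = (mat_adjoint U * V) $$ (i, j)"
  have Uc: "U \<in> carrier_mat n n" using U by (rule unitary_carrier)
  have G: "G = (\<Sum>z<n. cnj (U $$ (z, i)) * V $$ (z, j))"
    unfolding G_def using assms Uc by (simp add: scalar_prod_def lessThan_atLeast0)
  have PQ: "(col_projector n U i * col_projector n V j) $$ (x, y) = U $$ (x, i) * cnj (V $$ (y, j)) * G"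
    if "x < n" for x
    using that assms by (auto simp: G scalar_prod_def lessThan_atLeast0 sum_distrib_left ac_simps
        intro!: sum.cong)
  have "(mat_adjoint U * (col_projector n U i * col_projector n V j)) $$ (k, y)
      = (\<Sum>x<n. cnj (U $$ (x, k)) * (col_projector n U i * col_projector n V j) $$ (x, y))"
    using assms Uc by (simp add: scalar_prod_def lessThan_atLeast0)
  also have "\<dots> = cnj (V $$ (y, j)) * G * (\<Sum>x<n. cnj (U $$ (x, k)) * U $$ (x, i))"
    by (simp add: PQ sum_distrib_left ac_simps)
  finally show ?thesis
    unfolding unitary_cols_orthonormal[OF U \<open>k < n\<close> \<open>i < n\<close>] G_def by simp
qed

lemma coherence_col_projector_pairs:
  assumes U: "unitary n U" and V: "unitary n V" and D: "D \<in> carrier_mat n n" "diagonal_mat D"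
    and ij: "i < n" "j < n" "i' < n" "j' < n"
  defines "G \<equiv> \<lambda>i j. (mat_adjoint U * V) $$ (i, j)"
  shows "mtrace (mat_adjoint (col_projector n U i * col_projector n V j) * (U * D * mat_adjoint U)
      * (col_projector n U i' * col_projector n V j'))
    = (if i = i' \<and> j = j' then D $$ (i, i) * cnj (G i j) * G i j else 0)"
proof -
  have Uc: "U \<in> carrier_mat n n" and Vc: "V \<in> carrier_mat n n"
    using U V by (simp_all add: unitary_carrier)
  have V_orth: "(\<Sum>y<n. V $$ (y, j) * cnj (V $$ (y, j'))) = (if j = j' then 1 else 0)"
    using unitary_cols_orthonormal[OF V ij(4,2)] by (simp add: ac_simps)
  have inner: "(\<Sum>y<n. cnj ((mat_adjoint U * (col_projector n U i * col_projector n V j)) $$ (k, y))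
        * D $$ (k, k) * (mat_adjoint U * (col_projector n U i' * col_projector n V j')) $$ (k, y))
      = (if k = i \<and> k = i' then D $$ (k, k) * cnj (G i j) * G i' j' * (if j = j' then 1 else 0) else 0)"
    if k: "k < n" for k
  proof -
    have "(\<Sum>y<n. cnj ((mat_adjoint U * (col_projector n U i * col_projector n V j)) $$ (k, y))
        * D $$ (k, k) * (mat_adjoint U * (col_projector n U i' * col_projector n V j')) $$ (k, y))
      = (if k = i \<and> k = i'
         then D $$ (k, k) * cnj (G i j) * G i' j' * (\<Sum>y<n. V $$ (y, j) * cnj (V $$ (y, j')))
         else 0)"
      using U Vc ij k
      by (auto simp: adjoint_mult_col_projectors_index G_def sum_distrib_left ac_simps intro!: sum.cong)
    then show ?thesis unfolding V_orth .
  qed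
  have "mtrace (mat_adjoint (col_projector n U i * col_projector n V j) * (U * D * mat_adjoint U)
      * (col_projector n U i' * col_projector n V j'))
    = (\<Sum>k<n. \<Sum>y<n. cnj ((mat_adjoint U * (col_projector n U i * col_projector n V j)) $$ (k, y))
        * D $$ (k, k) * (mat_adjoint U * (col_projector n U i' * col_projector n V j')) $$ (k, y))"
    by (rule mtrace_diag_conj[OF Uc D mult_carrier_mat[of _ n n] mult_carrier_mat[of _ n n]]) simp_all
  also have "\<dots> = (\<Sum>k<n. if k = i \<and> k = i' then D $$ (k, k) * cnj (G i j) * G i' j'
      * (if j = j' then 1 else 0) else 0)"
    by (intro sum.cong refl inner) simp
  also have "\<dots> = (if i = i' \<and> j = j' then D $$ (i, i) * cnj (G i j) * G i j else 0)"
    using ij by (auto simp: sum.If_cases)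
  finally show ?thesis .
qed

lemma two_basis_history_eq_iff [simp]:
  "two_basis_history m i j = two_basis_history m i' j' \<longleftrightarrow> i = i' \<and> j = j'"
  by (simp add: two_basis_history_def)

theorem two_basis_family_extremal:
  fixes m :: nat
  assumes U: "unitary n U" and D: "D \<in> carrier_mat n n" "diagonal_mat D"
    and F: "unitary n F" and F_nz: "\<And>a b. a < n \<Longrightarrow> b < n \<Longrightarrow> F $$ (a, b) \<noteq> 0"
  defines "\<rho> \<equiv> U * D * mat_adjoint U" and "\<sigma> \<equiv> two_basis_family n U (U * F) m"
  shows "medium_consistent n \<rho> \<sigma>"
    and "card (nonzero_histories n \<rho> \<sigma>) = card {k. k < n \<and> D $$ (k, k) \<noteq> 0} * n"
proof -
  define S where "S = {k. k < n \<and> D $$ (k, k) \<noteq> 0}"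
  let ?h = "\<lambda>(i, j). two_basis_history m i j"
  have V: "unitary n (U * F)" using U F by (rule unitary_mult)
  have Uc: "U \<in> carrier_mat n n" "mat_adjoint U * U = 1\<^sub>m n" and Fc: "F \<in> carrier_mat n n"
    using U F by (simp_all add: unitary_def)
  have UV: "mat_adjoint U * (U * F) = F"
    using Uc Fc by (simp add: left_mult_one_mat[OF Fc] flip: assoc_mult_mat[of _ n n _ n _ n])
  have coh: "coherence n \<rho> \<sigma> (two_basis_history m i j) (two_basis_history m i' j')
      = (if i = i' \<and> j = j' then D $$ (i, i) * cnj (F $$ (i, j)) * F $$ (i, j) else 0)"
    if "i < n" "j < n" "i' < n" "j' < n" for i j i' j'
    unfolding coherence_def \<sigma>_def \<rho>_def history_op_two_basis_family[OF that(1,2)]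
      history_op_two_basis_family[OF that(3,4)]
    using coherence_col_projector_pairs[OF U V D that] by (simp add: UV)
  have hist: "histories \<sigma> = ?h ` ({..<n} \<times> {..<n})"
    unfolding \<sigma>_def by (rule histories_two_basis_family)
  show "medium_consistent n \<rho> \<sigma>"
    unfolding medium_consistent_def hist_prob_def coherence_def[symmetric] hist
    using family_two_basis_family[OF U V] coh by (auto simp: \<sigma>_def)
  have "nonzero_histories n \<rho> \<sigma> = ?h ` (S \<times> {..<n})"
    unfolding nonzero_histories_def hist_prob_def coherence_def[symmetric] hist
    using coh F_nz by (auto simp: S_def image_iff)
  moreover have "inj_on ?h (S \<times> {..<n})" by (auto simp: inj_on_def)
  ultimately show "card (nonzero_histories n \<rho> \<sigma>) = card {k. k < n \<and> D $$ (k, k) \<noteq> 0} * n"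
    by (simp add: card_image card_cartesian_product S_def)
qed

theorem infinite_extremal_families:
  assumes U: "unitary n U" and D: "D \<in> carrier_mat n n" "diagonal_mat D" and "0 < n"
  shows "infinite {\<sigma>. medium_consistent n (U * D * mat_adjoint U) \<sigma> \<and>
    card (nonzero_histories n (U * D * mat_adjoint U) \<sigma>) = card {k. k < n \<and> D $$ (k, k) \<noteq> 0} * n}"
proof -
  obtain F where F: "unitary n F" and F_nz: "\<And>a b. a < n \<Longrightarrow> b < n \<Longrightarrow> F $$ (a, b) \<noteq> 0"
    using unitary_with_nonzero_entries[OF \<open>0 < n\<close>] by blast
  have "inj (two_basis_family n U (U * F))"
  proof (rule injI)
    fix a b assume "two_basis_family n U (U * F) a = two_basis_family n U (U * F) b"
    then have "length (two_basis_family n U (U * F) a) = length (two_basis_family n U (U * F) b)"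
      by (rule arg_cong)
    then show "a = b" by (simp add: two_basis_family_def)
  qed
  then have "infinite (range (two_basis_family n U (U * F)))"
    by (rule range_inj_infinite)
  moreover have "range (two_basis_family n U (U * F)) \<subseteq>
    {\<sigma>. medium_consistent n (U * D * mat_adjoint U) \<sigma> \<and>
      card (nonzero_histories n (U * D * mat_adjoint U) \<sigma>) = card {k. k < n \<and> D $$ (k, k) \<noteq> 0} * n}"
    using two_basis_family_extremal[OF U D F F_nz] by auto
  ultimately show ?thesis by (rule infinite_super[rotated])
qed

theorem lemma1:
  fixes \<Omega> :: nat and \<rho> :: "complex mat"
  assumes "density_matrix \<Omega> \<rho>"
  shows "(\<forall>\<sigma>. medium_consistent \<Omega> \<rho> \<sigma> \<longrightarrow>
            card (nonzero_histories \<Omega> \<rho> \<sigma>) \<le> mat_rank \<Omega> \<rho> * \<Omega>)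
       \<and> infinite {\<sigma>. medium_consistent \<Omega> \<rho> \<sigma> \<and>
            card (nonzero_histories \<Omega> \<rho> \<sigma>) = mat_rank \<Omega> \<rho> * \<Omega>}"
proof -
  have \<rho>: "\<rho> \<in> carrier_mat \<Omega> \<Omega>" "mat_adjoint \<rho> = \<rho>" and "mtrace \<rho> = 1"
    using assms unfolding density_matrix_def hermitian_mat_def by auto
  then have "0 < \<Omega>" using \<rho>(1) by (cases "\<Omega> = 0") (auto simp: mtrace_def)
  obtain U D where U: "unitary \<Omega> U" and D: "D \<in> carrier_mat \<Omega> \<Omega>" "diagonal_mat D"
    and \<rho>_eq: "\<rho> = U * D * mat_adjoint U"
    using hermitian_unitary_diagonalization[OF \<rho>] by blast
  have "mat_rank \<Omega> \<rho> = card {k. k < \<Omega> \<and> D $$ (k, k) \<noteq> 0}"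
    unfolding \<rho>_eq using U D by (rule mat_rank_diag_conj)
  then show ?thesis
    unfolding \<rho>_eq using card_nonzero_histories_le[OF U D] infinite_extremal_families[OF U D \<open>0 < \<Omega>\<close>]
    by auto
qed

end
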